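(* Let $S\subset\mathbb{R}^d$ be a nonempty compact convex set with diameter $D:=\sup_{x,y\in S}\|x-y\|$, and let $f$ be differentiable on $S$ with $L$-Lipschitz gradient on $S$ (not necessarily convex). Let $G:=\sup_{x\in S}\|\nabla f(x)\|<\infty$, fix $C\ge\max\{LD^2,\,GD\}$ with $C>0$, and let $f^*:=\inf_{x\in S}f(x)$. Let $\delta\ge0$ and suppose that for every $x\in S$ a vector $g_\delta(x)\in\mathbb{R}^d$ is available with \[ \big|\langle \nabla f(x)-g_\delta(x),\,s-x\rangle\big|\le\delta\,\|\nabla f(x)\|\quad\text{for all } s\in S. \] Let $\mathcal G(x):=\max_{s\in S}\langle\nabla f(x),\,x-s\rangle$ (the Frank–Wolfe gap) and $\tilde{\mathcal G}(x):=\max_{s\in S}\langle g_\delta(x),\,x-s\rangle$. Given $x^0\in S$, define iterates for $k=0,1,2,\dots$ by choosing $s^k\in\arg\min_{s\in S}\langle g_\delta(x^k),\,s-x^k\rangle$, setting \[ \overline\alpha_k:=\frac{\big(\tilde{\mathcal G}(x^k)-\delta\|\nabla f(x^k)\|\big)_+}{C},\qquad x^{k+1}:=x^k+\overline\alpha_k(s^k-x^k), \] where $(u)_+:=\max\{u,0\}$. Then for every $K\ge0$, \[ \min_{0\le k\le K}\big(\mathcal G(x^k)-2\delta\|\nabla f(x^k)\|\big)_+\le\sqrt{\frac{2C\,(f(x^0)-f^* )}{K+1}}. \]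
   Context: $\|\cdot\|$ is the Euclidean norm and $\langle\cdot,\cdot\rangle$ the Euclidean inner product. *)

theory Defs
  imports "HOL-Analysis.Analysis"
begin

definition fw_gap :: "'a::euclidean_space set \<Rightarrow> 'a \<Rightarrow> 'a \<Rightarrow> real" where
  "fw_gap S v x = (SUP s\<in>S. v \<bullet> (x - s))"

definition pos_part :: "real \<Rightarrow> real" where
  "pos_part u = max u 0"

end

theory Submission
  imports Defs
begin

text \<open>By the descent lemma, a step of length \<open>\<alpha>\<close> from \<open>x\<close> towards the vertex \<open>s\<close> chosen with
the inexact gradient decreases \<open>f\<close> by at least \<open>\<alpha> u - \<alpha>\<^sup>2 C / 2\<close>, where \<open>u\<close> is the inexact
gap minus \<open>\<delta> \<parallel>\<nabla>f(x)\<parallel>\<close>. The step \<open>\<alpha> = u\<^sub>+ / C\<close> lies in \<open>[0, 1]\<close> because \<open>C \<ge> G D\<close>,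
and gains \<open>u\<^sub>+\<^sup>2 / (2 C)\<close>. The gradient error moves every gap by at most \<open>\<delta> \<parallel>\<nabla>f(x)\<parallel>\<close>,
so the true gap minus \<open>2 \<delta> \<parallel>\<nabla>f(x)\<parallel>\<close> is at most \<open>u\<close>. Telescoping over \<open>K + 1\<close> steps
bounds the sum of the squared gaps by \<open>2 C (f(x\<^sup>0) - f\<^sup>*)\<close>, hence their minimum.\<close>

lemma lipschitz_gradient_upper_bound:
  fixes S :: "'a::real_inner set" and f :: "'a \<Rightarrow> real" and f' :: "'a \<Rightarrow> 'a"
  assumes "convex S" "x \<in> S" "y \<in> S"
    and deriv: "\<And>y. y \<in> S \<Longrightarrow> (f has_derivative (\<lambda>h. f' y \<bullet> h)) (at y within S)"
    and lip: "\<And>y z. y \<in> S \<Longrightarrow> z \<in> S \<Longrightarrow> norm (f' y - f' z) \<le> L * norm (y - z)"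
  shows "f y \<le> f x + f' x \<bullet> (y - x) + L / 2 * (norm (y - x))^2"
proof -
  define d where "d = y - x"
  define p where "p t = x + t *\<^sub>R d" for t :: real
  have pS: "p ` {0..1} \<subseteq> S"
  proof
    fix z assume "z \<in> p ` {0..1}"
    then obtain t where "t \<in> {0..1}" "z = (1 - t) *\<^sub>R x + t *\<^sub>R y"
      by (auto simp: p_def d_def algebra_simps)
    then show "z \<in> S" using assms(1-3) by (auto simp: convex_alt)
  qed
  \<comment> \<open>mean value theorem for \<open>f \<circ> p\<close> minus the quadratic model of the claim\<close>
  define h where "h t = f (p t) - t * (f' x \<bullet> d) - L / 2 * t^2 * (norm d)^2" for t
  define h' where "h' t r = r * (f' (p t) \<bullet> d) - r * (f' x \<bullet> d) - L * t * r * (norm d)^2" for t r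
  have "(h has_derivative h' t) (at t within {0..1})" if "t \<in> {0..1}" for t
  proof -
    have "((\<lambda>t. f (p t)) has_derivative (\<lambda>r. f' (p t) \<bullet> (r *\<^sub>R d))) (at t within {0..1})"
      by (rule has_derivative_in_compose2[OF deriv pS that])
        (auto simp: p_def[abs_def] intro!: derivative_eq_intros)
    then show ?thesis
      unfolding h_def h'_def by (auto intro!: derivative_eq_intros simp: fun_eq_iff)
  qed
  then obtain t where t: "t \<in> {0..1}" and mvt: "h 1 - h 0 = h' t 1"
    using mvt_very_simple[of 0 1 h h'] by auto
  have "(f' (p t) - f' x) \<bullet> d \<le> norm (f' (p t) - f' x) * norm d"
    by (rule norm_cauchy_schwarz)
  also have "\<dots> \<le> L * norm (p t - x) * norm d"
    using lip[of "p t" x] pS t assms(2) by (intro mult_right_mono) (auto simp: image_subset_iff)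
  also have "\<dots> = L * t * (norm d)^2"
    using t by (simp add: p_def power2_eq_square)
  finally have "h' t 1 \<le> 0"
    by (simp add: h'_def inner_diff_left)
  then show ?thesis
    using mvt by (simp add: h_def p_def d_def)
qed

lemma descent_along_direction:
  fixes S :: "'a::real_inner set" and f :: "'a \<Rightarrow> real" and f' :: "'a \<Rightarrow> 'a"
  assumes "convex S" "x \<in> S" "x + a *\<^sub>R d \<in> S"
    and "\<And>y. y \<in> S \<Longrightarrow> (f has_derivative (\<lambda>h. f' y \<bullet> h)) (at y within S)"
    and "\<And>y z. y \<in> S \<Longrightarrow> z \<in> S \<Longrightarrow> norm (f' y - f' z) \<le> L * norm (y - z)"
    and "a \<ge> 0" "f' x \<bullet> d \<le> - u" "L * (norm d)^2 \<le> C"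
  shows "f (x + a *\<^sub>R d) \<le> f x - a * u + a^2 * C / 2"
proof -
  have "f (x + a *\<^sub>R d) \<le> f x + a * (f' x \<bullet> d) + a^2 * (L * (norm d)^2) / 2"
    using lipschitz_gradient_upper_bound[OF assms(1-5)]
    by (simp add: power_mult_distrib mult_ac)
  also have "\<dots> \<le> f x - a * u + a^2 * C / 2"
    using assms(6-8) mult_left_mono[of "f' x \<bullet> d" "- u" a]
      mult_left_mono[of "L * (norm d)^2" C "a^2"] by simp
  finally show ?thesis .
qed

lemma pos_part_step_gain:
  assumes "C > 0"
  shows "pos_part u / C * u - (pos_part u / C)^2 * C / 2 = (pos_part u)^2 / (2 * C)"
  using assms by (simp add: pos_part_def max_def power2_eq_square field_simps)

lemma fw_gap_eq_minimizer:
  assumes "s \<in> S" "\<And>t. t \<in> S \<Longrightarrow> v \<bullet> (s - x) \<le> v \<bullet> (t - x)"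
  shows "fw_gap S v x = v \<bullet> (x - s)"
  unfolding fw_gap_def
proof (rule cSup_eq_maximum)
  show "v \<bullet> (x - s) \<in> (\<lambda>t. v \<bullet> (x - t)) ` S"
    using assms(1) by blast
  show "y \<le> v \<bullet> (x - s)" if "y \<in> (\<lambda>t. v \<bullet> (x - t)) ` S" for y
    using that assms(2) by (auto simp: inner_diff_right)
qed

lemma fw_gap_le_perturbed:
  assumes "s \<in> S" "\<And>t. t \<in> S \<Longrightarrow> w \<bullet> (s - x) \<le> w \<bullet> (t - x)"
    and "\<And>t. t \<in> S \<Longrightarrow> \<bar>(v - w) \<bullet> (t - x)\<bar> \<le> e"
  shows "fw_gap S v x \<le> fw_gap S w x + e"
proof -
  have "fw_gap S v x \<le> w \<bullet> (x - s) + e"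
    unfolding fw_gap_def
  proof (rule cSUP_least)
    show "S \<noteq> {}" using assms(1) by blast
    fix t assume t: "t \<in> S"
    have "v \<bullet> (x - t) = w \<bullet> (x - t) - (v - w) \<bullet> (t - x)"
      by (simp add: algebra_simps)
    also have "\<dots> \<le> w \<bullet> (x - s) + e"
      using assms(2)[OF t] assms(3)[OF t] by (simp add: inner_diff_right)
    finally show "v \<bullet> (x - t) \<le> w \<bullet> (x - s) + e" .
  qed
  then show ?thesis
    using fw_gap_eq_minimizer[OF assms(1,2)] by simp
qed

lemma inexact_vertex_direction:
  assumes "s \<in> S" "\<And>t. t \<in> S \<Longrightarrow> w \<bullet> (s - x) \<le> w \<bullet> (t - x)"
    and "\<bar>(v - w) \<bullet> (s - x)\<bar> \<le> e"
  shows "v \<bullet> (s - x) \<le> - (fw_gap S w x - e)"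
    and "fw_gap S w x - e \<le> norm v * norm (s - x)"
proof -
  have gap: "fw_gap S w x = w \<bullet> (x - s)"
    by (rule fw_gap_eq_minimizer[OF assms(1,2)])
  have split: "v \<bullet> (s - x) = - (w \<bullet> (x - s)) + (v - w) \<bullet> (s - x)"
    by (simp add: algebra_simps)
  then show "v \<bullet> (s - x) \<le> - (fw_gap S w x - e)"
    using assms(3) by (simp add: gap)
  show "fw_gap S w x - e \<le> norm v * norm (s - x)"
    using split assms(3) norm_cauchy_schwarz[of "- v" "s - x"] by (simp add: gap)
qed

lemma inexact_fw_step:
  fixes S :: "'a::euclidean_space set" and f :: "'a \<Rightarrow> real" and f' :: "'a \<Rightarrow> 'a"
  assumes S: "bounded S" "convex S"
    and deriv: "\<And>y. y \<in> S \<Longrightarrow> (f has_derivative (\<lambda>h. f' y \<bullet> h)) (at y within S)"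
    and lip: "\<And>y z. y \<in> S \<Longrightarrow> z \<in> S \<Longrightarrow> norm (f' y - f' z) \<le> L * norm (y - z)"
    and x: "x \<in> S" and s: "s \<in> S" "\<And>t. t \<in> S \<Longrightarrow> w \<bullet> (s - x) \<le> w \<bullet> (t - x)"
    and approx: "\<And>t. t \<in> S \<Longrightarrow> \<bar>(f' x - w) \<bullet> (t - x)\<bar> \<le> \<delta> * norm (f' x)"
    and C: "L * (diameter S)^2 \<le> C" "norm (f' x) * diameter S \<le> C" "C > 0"
  defines "a \<equiv> pos_part (fw_gap S w x - \<delta> * norm (f' x)) / C"
  shows "x + a *\<^sub>R (s - x) \<in> S"
    and "f (x + a *\<^sub>R (s - x))
           \<le> f x - (pos_part (fw_gap S (f' x) x - 2 * \<delta> * norm (f' x)))^2 / (2 * C)"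
proof -
  define u where "u = fw_gap S w x - \<delta> * norm (f' x)"
  note direction = inexact_vertex_direction[OF s approx[OF s(1)], folded u_def]
  have dist_sx: "norm (s - x) \<le> diameter S"
    using diameter_bounded_bound[OF S(1) s(1) x] by (simp add: dist_norm)
  have "u \<le> C"
    using direction(2) mult_left_mono[OF dist_sx norm_ge_zero[of "f' x"]] C(2) by linarith
  then have a01: "0 \<le> a" "a \<le> 1"
    using C(3) by (auto simp: a_def u_def[symmetric] pos_part_def)
  have "x + a *\<^sub>R (s - x) = (1 - a) *\<^sub>R x + a *\<^sub>R s"
    by (simp add: algebra_simps)
  then show new: "x + a *\<^sub>R (s - x) \<in> S"
    using a01 S(2) x s(1) by (auto simp: convex_alt)
  have curv: "L * (norm (s - x))^2 \<le> C"
  proof (cases "L \<ge> 0")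
    case True
    then have "L * (norm (s - x))^2 \<le> L * (diameter S)^2"
      using dist_sx by (intro mult_left_mono power_mono) auto
    then show ?thesis using C(1) by linarith
  next
    case False
    then have "L * (norm (s - x))^2 \<le> 0"
      by (simp add: mult_nonpos_nonneg)
    then show ?thesis using C(3) by linarith
  qed
  have "f (x + a *\<^sub>R (s - x)) \<le> f x - (a * u - a^2 * C / 2)"
    using descent_along_direction[OF S(2) x new deriv lip a01(1) direction(1) curv] by simp
  also have "\<dots> = f x - (pos_part u)^2 / (2 * C)"
    using pos_part_step_gain[OF C(3), of u] by (simp add: a_def u_def)
  also have "\<dots> \<le> f x - (pos_part (fw_gap S (f' x) x - 2 * \<delta> * norm (f' x)))^2 / (2 * C)"
  proof -
    have "fw_gap S (f' x) x \<le> fw_gap S w x + \<delta> * norm (f' x)"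
      by (rule fw_gap_le_perturbed[OF s approx])
    then have "pos_part (fw_gap S (f' x) x - 2 * \<delta> * norm (f' x)) \<le> pos_part u"
      by (simp add: u_def pos_part_def)
    then show ?thesis
      using C(3) by (simp add: divide_right_mono power_mono pos_part_def)
  qed
  finally show "f (x + a *\<^sub>R (s - x))
      \<le> f x - (pos_part (fw_gap S (f' x) x - 2 * \<delta> * norm (f' x)))^2 / (2 * C)" .
qed

lemma min_le_sqrt_of_sufficient_decrease:
  fixes F r :: "nat \<Rightarrow> real"
  assumes "C > 0" "\<And>k. 0 \<le> r k" "\<And>k. F (Suc k) \<le> F k - (r k)^2 / (2 * C)" "\<And>k. m \<le> F k"
  shows "(MIN k\<in>{0..K}. r k) \<le> sqrt (2 * C * (F 0 - m) / (real K + 1))"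
proof -
  define \<mu> where "\<mu> = (MIN k\<in>{0..K}. r k)"
  have "\<mu> \<ge> 0" using assms(2) by (simp add: \<mu>_def)
  have "(real K + 1) * \<mu>^2 = (\<Sum>k<Suc K. \<mu>^2)"
    by simp
  also have "\<dots> \<le> (\<Sum>k<Suc K. (r k)^2)"
    using \<open>\<mu> \<ge> 0\<close> by (intro sum_mono power_mono) (auto simp: \<mu>_def)
  also have "\<dots> \<le> (\<Sum>k<Suc K. 2 * C * (F k - F (Suc k)))"
    using assms(1,3) by (intro sum_mono) (simp add: field_simps)
  also have "\<dots> = 2 * C * (F 0 - F (Suc K))"
    by (simp add: sum_distrib_left[symmetric] sum_lessThan_telescope')
  also have "\<dots> \<le> 2 * C * (F 0 - m)"
    using assms(1,4) by simp
  finally have "\<mu>^2 \<le> 2 * C * (F 0 - m) / (real K + 1)"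
    by (simp add: field_simps)
  then show ?thesis
    using \<open>\<mu> \<ge> 0\<close> real_sqrt_le_mono by (fastforce simp: \<mu>_def)
qed

lemma bdd_above_norm_lipschitz_image:
  fixes F :: "'a::real_normed_vector \<Rightarrow> 'b::real_normed_vector"
  assumes "compact S" "\<And>y z. y \<in> S \<Longrightarrow> z \<in> S \<Longrightarrow> norm (F y - F z) \<le> L * norm (y - z)"
  shows "bdd_above ((\<lambda>y. norm (F y)) ` S)"
proof -
  have "\<bar>L\<bar>-lipschitz_on S F"
  proof (rule lipschitz_onI)
    fix y z assume "y \<in> S" "z \<in> S"
    then have "norm (F y - F z) \<le> L * norm (y - z)" by (rule assms(2))
    also have "\<dots> \<le> \<bar>L\<bar> * norm (y - z)" by (intro mult_right_mono) auto
    finally show "dist (F y) (F z) \<le> \<bar>L\<bar> * dist y z" by (simp add: dist_norm)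
  qed simp
  then have "compact (F ` S)"
    using assms(1) by (intro compact_continuous_image lipschitz_on_continuous_on)
  then show ?thesis
    by (intro bounded_imp_bdd_above) (simp add: bounded_norm_comp compact_imp_bounded)
qed

theorem theorem3:
  fixes S :: "'a::euclidean_space set"
    and f :: "'a \<Rightarrow> real" and f' :: "'a \<Rightarrow> 'a" and g :: "'a \<Rightarrow> 'a"
    and L C \<delta> :: real and x s :: "nat \<Rightarrow> 'a" and K :: nat
  assumes S: "S \<noteq> {}" "compact S" "convex S"
    and deriv: "\<And>y. y \<in> S \<Longrightarrow> (f has_derivative (\<lambda>h. f' y \<bullet> h)) (at y within S)"
    and lip: "\<And>y z. y \<in> S \<Longrightarrow> z \<in> S \<Longrightarrow> norm (f' y - f' z) \<le> L * norm (y - z)"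
    and C: "C \<ge> max (L * (diameter S)^2) ((SUP y\<in>S. norm (f' y)) * diameter S)" "C > 0"
    and delta_nonneg: "\<delta> \<ge> 0"
    and approx_grad: "\<And>y t. y \<in> S \<Longrightarrow> t \<in> S \<Longrightarrow>
                   \<bar>(f' y - g y) \<bullet> (t - y)\<bar> \<le> \<delta> * norm (f' y)"
    and x0: "x 0 \<in> S"
    and sk: "\<And>k. s k \<in> S \<and> (\<forall>t\<in>S. g (x k) \<bullet> (s k - x k) \<le> g (x k) \<bullet> (t - x k))"
    and step: "\<And>k. x (Suc k) = x k +
       scaleR (pos_part (fw_gap S (g (x k)) (x k) - \<delta> * norm (f' (x k))) / C) (s k - x k)"
  shows "(MIN k\<in>{0..K}. pos_part (fw_gap S (f' (x k)) (x k) - 2 * \<delta> * norm (f' (x k))))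
           \<le> sqrt (2 * C * (f (x 0) - (INF y\<in>S. f y)) / (real K + 1))"
proof -
  have grad_C: "norm (f' y) * diameter S \<le> C" if "y \<in> S" for y
    using mult_right_mono[OF cSUP_upper[OF that bdd_above_norm_lipschitz_image[OF S(2) lip]]
        diameter_ge_0[OF compact_imp_bounded[OF S(2)]]] C(1)
    by simp
  have fw_step: "x (Suc k) \<in> S \<and> f (x (Suc k)) \<le> f (x k)
      - (pos_part (fw_gap S (f' (x k)) (x k) - 2 * \<delta> * norm (f' (x k))))^2 / (2 * C)"
    if "x k \<in> S" for k
    unfolding step
    using inexact_fw_step[OF compact_imp_bounded[OF S(2)] S(3) deriv lip that]
      sk[of k] approx_grad[OF that] grad_C[OF that] C by auto
  have xS: "x k \<in> S" for k
    by (induction k) (use x0 fw_step in auto)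
  have "continuous_on S f"
    using deriv by (meson continuous_on_eq_continuous_within has_derivative_continuous)
  then have "bdd_below (f ` S)"
    using S(2) by (simp add: bounded_imp_bdd_below compact_imp_bounded compact_continuous_image)
  then have "(INF y\<in>S. f y) \<le> f (x k)" for k
    using xS by (simp add: cINF_lower)
  then show ?thesis
    using fw_step[OF xS] C by (intro min_le_sqrt_of_sufficient_decrease) (auto simp: pos_part_def)
qed

end
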